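(* Let $s,t$ be real numbers with $t>0$ and $s>1+t$, and put \[ \mathcal{S}(s,t)=\sum_{p}\frac{p^s}{p^s-1}\cdot\frac{p^t}{p^s-1+p^t}\ln p,\qquad \mathcal{T}(s,t)=\sum_{p}\frac{p^t}{p^s-1+p^t}\ln p, \] where both sums run over all primes $p$. Let $a,b$ be coprime positive integers and $c=a+b$, and suppose that $c<R(c)^{\mathcal{S}(s,t)/\mathcal{T}(s,t)}$. Then \[ a+b<R(abc)^{2}. \]
   Context: For a positive integer $n$, $R(n)$ denotes the radical of $n$, i.e. the product of the distinct primes dividing $n$ (with $R(1)=1$). For $t>0$ and $s>1+t$ the two series defining $\mathcal{S}(s,t)$ and $\mathcal{T}(s,t)$ converge. *)

theory Defs
  imports "HOL-Analysis.Analysis" "HOL-Computational_Algebra.Primes"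
begin

definition radical :: "nat \<Rightarrow> nat" where
  "radical n = (\<Prod>p\<in>prime_factors n. p)"

definition calS :: "real \<Rightarrow> real \<Rightarrow> real" where
  "calS s t = (\<Sum>\<^sub>\<infinity>p\<in>{p::nat. prime p}.
      (real p powr s / (real p powr s - 1)) *
      (real p powr t / (real p powr s - 1 + real p powr t)) * ln (real p))"

definition calT :: "real \<Rightarrow> real \<Rightarrow> real" where
  "calT s t = (\<Sum>\<^sub>\<infinity>p\<in>{p::nat. prime p}.
      (real p powr t / (real p powr s - 1 + real p powr t)) * ln (real p))"

end

theory Submission
  imports Defs
begin

text \<open>
  For every prime p the factor p^s / (p^s - 1) is at most 2 as soon as s \<ge> 1, so termwise
  S(s,t) \<le> 2 T(s,t) and hence S(s,t)/T(s,t) \<le> 2. The hypothesis on c then gives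
  c < R(c)^2, and R(c) \<le> R(abc) because c divides abc.
\<close>

lemma infsum_le_cmult_infsum:
  fixes f g :: "'a \<Rightarrow> real"
  assumes "f summable_on A" and "\<And>x. x \<in> A \<Longrightarrow> 0 \<le> f x"
    and "\<And>x. x \<in> A \<Longrightarrow> g x \<le> C * f x" and "C \<ge> 0"
  shows "(\<Sum>\<^sub>\<infinity>x\<in>A. g x) \<le> C * (\<Sum>\<^sub>\<infinity>x\<in>A. f x)"
proof (cases "g summable_on A")
  case True
  have "(\<Sum>\<^sub>\<infinity>x\<in>A. g x) \<le> (\<Sum>\<^sub>\<infinity>x\<in>A. C * f x)"
    using True summable_on_cmult_right[OF assms(1)] assms(3) by (rule infsum_mono)
  also have "\<dots> = C * (\<Sum>\<^sub>\<infinity>x\<in>A. f x)"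
    by (rule infsum_cmult_right')
  finally show ?thesis .
next
  case False
  then show ?thesis
    using assms(2,4) by (simp add: infsum_not_exists infsum_nonneg)
qed

lemma
  fixes s t :: real and p :: nat
  assumes "s \<ge> 1" and "prime p"
  shows calT_term_nonneg:
      "0 \<le> real p powr t / (real p powr s - 1 + real p powr t) * ln (real p)"
    and calS_term_le_twice_calT_term:
      "real p powr s / (real p powr s - 1) *
        (real p powr t / (real p powr s - 1 + real p powr t)) * ln (real p)
       \<le> 2 * (real p powr t / (real p powr s - 1 + real p powr t) * ln (real p))"
proof -
  have p: "real p \<ge> 2"
    using prime_ge_2_nat[OF assms(2)] by simp
  have ps: "real p powr s \<ge> 2"
    using powr_mono[OF assms(1), of "real p"] p by simp
  have T: "0 \<le> real p powr t / (real p powr s - 1 + real p powr t) * ln (real p)"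
    using ps p by (intro mult_nonneg_nonneg divide_nonneg_nonneg) auto
  have factor: "real p powr s / (real p powr s - 1) \<le> 2"
    using ps by (simp add: divide_simps)
  show "0 \<le> real p powr t / (real p powr s - 1 + real p powr t) * ln (real p)"
    by (fact T)
  show "real p powr s / (real p powr s - 1) *
        (real p powr t / (real p powr s - 1 + real p powr t)) * ln (real p)
       \<le> 2 * (real p powr t / (real p powr s - 1 + real p powr t) * ln (real p))"
    using mult_right_mono[OF factor T] by (simp add: mult.assoc)
qed

lemma calT_nonneg:
  assumes "s \<ge> 1"
  shows "calT s t \<ge> 0"
  unfolding calT_def using calT_term_nonneg[OF assms] by (auto intro: infsum_nonneg)

lemma calS_div_calT_le_2:
  assumes "s \<ge> 1"
  shows "calS s t / calT s t \<le> 2"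
proof (cases "calT s t = 0")
  case True
  then show ?thesis by simp
next
  case False
  then have summable: "(\<lambda>p. real p powr t / (real p powr s - 1 + real p powr t) * ln (real p))
      summable_on {p::nat. prime p}"
    unfolding calT_def by (meson infsum_not_exists)
  have "calS s t \<le> 2 * calT s t"
    unfolding calS_def calT_def
    using summable calT_term_nonneg[OF assms] calS_term_le_twice_calT_term[OF assms]
    by (intro infsum_le_cmult_infsum) auto
  moreover have "calT s t > 0"
    using False calT_nonneg[OF assms, of t] by simp
  ultimately show ?thesis
    by (simp add: divide_simps)
qed

lemma radical_pos: "radical n > 0"
  unfolding radical_def by (auto intro: prod_pos prime_gt_0_nat dest: in_prime_factors_imp_prime)

lemma radical_mono_dvd:
  assumes "m dvd n" and "n \<noteq> 0"
  shows "radical m \<le> radical n"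
proof -
  have "prime_factors m \<subseteq> prime_factors n"
    using assms by (auto intro: dvd_trans simp: in_prime_factors_iff)
  then have "radical m dvd radical n"
    unfolding radical_def by (intro prod_dvd_prod_subset) auto
  then show ?thesis
    using radical_pos[of n] by (simp add: dvd_imp_le)
qed

theorem theorem2:
  fixes s t :: real and a b c :: nat
  assumes "t > 0" and "s > 1 + t"
    and "a > 0" and "b > 0" and "coprime a b" and "c = a + b"
    and "real c < real (radical c) powr (calS s t / calT s t)"
  shows "a + b < (radical (a * b * c))^2"
proof -
  have R: "real (radical c) \<ge> 1"
    using radical_pos[of c] by linarith
  have "real c < real (radical c) powr (calS s t / calT s t)"
    by (fact assms(7))
  also have "\<dots> \<le> real (radical c) powr 2"
    using R calS_div_calT_le_2[of s t] assms(1,2) by (intro powr_mono) auto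
  also have "\<dots> = real (radical c ^ 2)"
    using R by (simp add: powr_realpow)
  finally have "c < radical c ^ 2"
    by linarith
  also have "radical c \<le> radical (a * b * c)"
    using assms(3,4,6) by (intro radical_mono_dvd) auto
  then have "radical c ^ 2 \<le> radical (a * b * c) ^ 2"
    by (simp add: power_mono)
  finally show ?thesis
    using assms(6) by simp
qed

end
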